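(* Let $P$ and $Q$ be two probability distributions on a finite set $\mathcal{A}$ that are positive on $\mathcal{A}$. Then $$\min_{x\in\mathcal{A}}\frac{P(x)}{Q(x)}\cdot\chi^2(Q,P)\;\le\;\frac{\chi^2(P,Q)}{1+\chi^2(P,Q)}\;\le\;\max_{x\in\mathcal{A}}\frac{P(x)}{Q(x)}\cdot\chi^2(Q,P).$$
   Context: For positive probability distributions $P,Q$ on a finite set $\mathcal{A}$, the chi-squared divergence is $\chi^2(P,Q)=\sum_{x\in\mathcal{A}}\frac{(P(x)-Q(x))^2}{Q(x)}$; thus $\chi^2(Q,P)=\sum_{x\in\mathcal{A}}\frac{(Q(x)-P(x))^2}{P(x)}$. *)

theory Defs
  imports Complex_Main
begin

definition chi2 :: "'a set \<Rightarrow> ('a \<Rightarrow> real) \<Rightarrow> ('a \<Rightarrow> real) \<Rightarrow> real" where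
  "chi2 A P Q = (\<Sum>x\<in>A. (P x - Q x)^2 / Q x)"

end

theory Submission
  imports Defs "HOL-Analysis.Convex"
begin

text \<open>The upper bound is termwise: (P - Q)^2/Q = (P/Q) (Q - P)^2/P and
  \<open>a/(1 + a) \<le> a\<close>. For the lower bound, under Q the likelihood ratio P/Q has mean 1 and
  variance \<open>a = \<chi>^2(P,Q)\<close>, its inverse Q/P has mean \<open>1 + b\<close> with \<open>b = \<chi>^2(Q,P)\<close>, and the
  covariance of the two is \<open>1 - (1 + b) = -b\<close>. The Cauchy--Schwarz inequality for covariances
  gives \<open>b^2 \<le> a V\<close> with V the Q-variance of Q/P, while weighting the second moment of Q/P
  around 1 by \<open>m \<le> P/Q\<close> gives \<open>m (V + b^2) \<le> b\<close>. Eliminating V yields \<open>m b (1 + a) \<le> a\<close>.\<close>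

definition weighted_var :: "'a set \<Rightarrow> ('a \<Rightarrow> real) \<Rightarrow> ('a \<Rightarrow> real) \<Rightarrow> real" where
  "weighted_var A w f = (\<Sum>x\<in>A. w x * f x ^ 2) - (\<Sum>x\<in>A. w x * f x) ^ 2"

definition weighted_cov ::
    "'a set \<Rightarrow> ('a \<Rightarrow> real) \<Rightarrow> ('a \<Rightarrow> real) \<Rightarrow> ('a \<Rightarrow> real) \<Rightarrow> real" where
  "weighted_cov A w f g = (\<Sum>x\<in>A. w x * f x * g x) - (\<Sum>x\<in>A. w x * f x) * (\<Sum>x\<in>A. w x * g x)"

lemma sum_weighted_sq_diff:
  fixes w f :: "'a \<Rightarrow> real"
  assumes "(\<Sum>x\<in>A. w x) = 1"
  shows "(\<Sum>x\<in>A. w x * (f x - t) ^ 2) = weighted_var A w f + ((\<Sum>x\<in>A. w x * f x) - t) ^ 2"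
proof -
  have "(\<Sum>x\<in>A. w x * (f x - t) ^ 2)
      = (\<Sum>x\<in>A. w x * f x ^ 2) - 2 * t * (\<Sum>x\<in>A. w x * f x) + t ^ 2 * (\<Sum>x\<in>A. w x)"
    by (simp add: power2_diff algebra_simps sum.distrib sum_subtractf sum_distrib_left
        sum_distrib_right)
  then show ?thesis
    using assms by (simp add: weighted_var_def power2_diff)
qed

lemma weighted_Cauchy_Schwarz_sum:
  fixes w f g :: "'a \<Rightarrow> real"
  assumes "\<And>x. x \<in> A \<Longrightarrow> w x \<ge> 0"
  shows "(\<Sum>x\<in>A. w x * f x * g x) ^ 2 \<le> (\<Sum>x\<in>A. w x * f x ^ 2) * (\<Sum>x\<in>A. w x * g x ^ 2)"
proof -
  have "(\<Sum>x\<in>A. w x * f x * g x) = (\<Sum>x\<in>A. (sqrt (w x) * f x) * (sqrt (w x) * g x))"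
    and "(\<Sum>x\<in>A. w x * f x ^ 2) = (\<Sum>x\<in>A. (sqrt (w x) * f x) ^ 2)"
    and "(\<Sum>x\<in>A. w x * g x ^ 2) = (\<Sum>x\<in>A. (sqrt (w x) * g x) ^ 2)"
    using assms by (auto intro!: sum.cong simp: power_mult_distrib algebra_simps)
  then show ?thesis
    using Cauchy_Schwarz_ineq_sum by metis
qed

lemma weighted_cov_sq_le:
  fixes w f g :: "'a \<Rightarrow> real"
  assumes "\<And>x. x \<in> A \<Longrightarrow> w x \<ge> 0" and "(\<Sum>x\<in>A. w x) = 1"
  shows "weighted_cov A w f g ^ 2 \<le> weighted_var A w f * weighted_var A w g"
proof -
  define \<mu> where "\<mu> = (\<Sum>x\<in>A. w x * f x)"
  define \<nu> where "\<nu> = (\<Sum>x\<in>A. w x * g x)"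
  have "(\<Sum>x\<in>A. w x * (f x - \<alpha>) * (g x - \<beta>))
      = (\<Sum>x\<in>A. w x * f x * g x) - \<beta> * (\<Sum>x\<in>A. w x * f x) - \<alpha> * (\<Sum>x\<in>A. w x * g x)
        + \<alpha> * \<beta> * (\<Sum>x\<in>A. w x)" for \<alpha> \<beta>
    by (simp add: algebra_simps sum.distrib sum_subtractf sum_distrib_left)
  then have "weighted_cov A w f g = (\<Sum>x\<in>A. w x * (f x - \<mu>) * (g x - \<nu>))"
    using assms(2) by (simp add: weighted_cov_def \<mu>_def \<nu>_def)
  moreover have "weighted_var A w f = (\<Sum>x\<in>A. w x * (f x - \<mu>) ^ 2)"
    and "weighted_var A w g = (\<Sum>x\<in>A. w x * (g x - \<nu>) ^ 2)"
    using sum_weighted_sq_diff[OF assms(2)] by (simp_all add: \<mu>_def \<nu>_def)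
  ultimately show ?thesis
    using weighted_Cauchy_Schwarz_sum[of A w "\<lambda>x. f x - \<mu>" "\<lambda>x. g x - \<nu>"] assms(1) by simp
qed

lemma chi2_nonneg:
  assumes "\<And>x. x \<in> A \<Longrightarrow> Q x > 0"
  shows "chi2 A P Q \<ge> 0"
  unfolding chi2_def using assms by (intro sum_nonneg) (simp add: less_imp_le)

lemma chi2_le_mult_chi2_swap:
  assumes "\<And>x. x \<in> A \<Longrightarrow> P x > 0" and "\<And>x. x \<in> A \<Longrightarrow> Q x > 0"
    and "\<And>x. x \<in> A \<Longrightarrow> P x / Q x \<le> c"
  shows "chi2 A P Q \<le> c * chi2 A Q P"
proof -
  have "chi2 A P Q = (\<Sum>x\<in>A. P x / Q x * ((Q x - P x) ^ 2 / P x))"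
    unfolding chi2_def
    by (intro sum.cong) (auto simp: field_simps power2_eq_square assms(1,2)[THEN less_imp_not_eq2])
  also have "\<dots> \<le> (\<Sum>x\<in>A. c * ((Q x - P x) ^ 2 / P x))"
    using assms by (intro sum_mono mult_right_mono) (auto simp: less_imp_le)
  also have "\<dots> = c * chi2 A Q P"
    by (simp add: chi2_def sum_distrib_left)
  finally show ?thesis .
qed

locale positive_distributions =
  fixes A :: "'a set" and P Q :: "'a \<Rightarrow> real"
  assumes P_pos: "\<And>x. x \<in> A \<Longrightarrow> P x > 0" and Q_pos: "\<And>x. x \<in> A \<Longrightarrow> Q x > 0"
    and sum_P: "(\<Sum>x\<in>A. P x) = 1" and sum_Q: "(\<Sum>x\<in>A. Q x) = 1"
begin

lemma P_nonzero [simp]: "x \<in> A \<Longrightarrow> P x \<noteq> 0"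
  and Q_nonzero [simp]: "x \<in> A \<Longrightarrow> Q x \<noteq> 0"
  using P_pos Q_pos by (simp_all add: less_imp_not_eq2)

lemma sum_Q_mult_ratio: "(\<Sum>x\<in>A. Q x * (P x / Q x)) = 1"
  using sum_P by simp

lemma sum_Q_mult_inv_ratio: "(\<Sum>x\<in>A. Q x * (Q x / P x)) = 1 + chi2 A Q P"
proof -
  have "(\<Sum>x\<in>A. Q x * (Q x / P x)) = (\<Sum>x\<in>A. (Q x - P x) ^ 2 / P x + (Q x - P x) + Q x)"
    by (intro sum.cong) (auto simp: field_simps power2_eq_square)
  then show ?thesis
    by (simp add: chi2_def sum.distrib sum_subtractf sum_P sum_Q flip: sum_distrib_left)
qed

lemma chi2_eq_weighted_var_ratio: "chi2 A P Q = weighted_var A Q (\<lambda>x. P x / Q x)"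
proof -
  have "chi2 A P Q = (\<Sum>x\<in>A. Q x * (P x / Q x - 1) ^ 2)"
    unfolding chi2_def by (intro sum.cong) (auto simp: field_simps power2_eq_square)
  then show ?thesis
    using sum_weighted_sq_diff[OF sum_Q] sum_Q_mult_ratio by simp
qed

lemma weighted_cov_ratio_inv_ratio:
  "weighted_cov A Q (\<lambda>x. P x / Q x) (\<lambda>x. Q x / P x) = - chi2 A Q P"
proof -
  have "(\<Sum>x\<in>A. Q x * (P x / Q x) * (Q x / P x)) = 1"
    using sum_Q by simp
  then show ?thesis
    unfolding weighted_cov_def sum_Q_mult_ratio sum_Q_mult_inv_ratio by simp
qed

lemma chi2_swap_sq_le: "chi2 A Q P ^ 2 \<le> chi2 A P Q * weighted_var A Q (\<lambda>x. Q x / P x)"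
  using weighted_cov_sq_le[of A Q "\<lambda>x. P x / Q x" "\<lambda>x. Q x / P x"] Q_pos sum_Q
  by (simp add: weighted_cov_ratio_inv_ratio chi2_eq_weighted_var_ratio less_imp_le)

lemma mult_weighted_var_inv_ratio_le:
  assumes "\<And>x. x \<in> A \<Longrightarrow> c \<le> P x / Q x"
  shows "c * (weighted_var A Q (\<lambda>x. Q x / P x) + chi2 A Q P ^ 2) \<le> chi2 A Q P"
proof -
  have "weighted_var A Q (\<lambda>x. Q x / P x) + chi2 A Q P ^ 2 = (\<Sum>x\<in>A. Q x * (Q x / P x - 1) ^ 2)"
    using sum_weighted_sq_diff[OF sum_Q, of "\<lambda>x. Q x / P x" 1, unfolded sum_Q_mult_inv_ratio]
    by simp
  then have "c * (weighted_var A Q (\<lambda>x. Q x / P x) + chi2 A Q P ^ 2)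
      = (\<Sum>x\<in>A. c * (Q x * (Q x / P x - 1) ^ 2))"
    by (simp add: sum_distrib_left)
  also have "\<dots> = (\<Sum>x\<in>A. c * Q x / P x * ((Q x - P x) ^ 2 / P x))"
    by (intro sum.cong) (auto simp: field_simps power2_eq_square)
  also have "\<dots> \<le> (\<Sum>x\<in>A. 1 * ((Q x - P x) ^ 2 / P x))"
  proof (intro sum_mono mult_right_mono)
    fix x assume "x \<in> A"
    then show "c * Q x / P x \<le> 1" and "0 \<le> (Q x - P x) ^ 2 / P x"
      using assms P_pos Q_pos by (auto simp: field_simps)
  qed
  finally show ?thesis
    by (simp add: chi2_def)
qed

lemma chi2_swap_mult_one_plus_chi2_le:
  assumes "\<And>x. x \<in> A \<Longrightarrow> c \<le> P x / Q x"
  shows "c * chi2 A Q P * (1 + chi2 A P Q) \<le> chi2 A P Q"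
proof -
  define a where "a = chi2 A P Q"
  define b where "b = chi2 A Q P"
  define V where "V = weighted_var A Q (\<lambda>x. Q x / P x)"
  have "a \<ge> 0" "b \<ge> 0"
    using chi2_nonneg P_pos Q_pos by (auto simp: a_def b_def)
  show ?thesis
  proof (cases "c \<le> 0")
    case True
    then have "c * b * (1 + a) \<le> 0"
      using \<open>a \<ge> 0\<close> \<open>b \<ge> 0\<close> by (simp add: mult_nonpos_nonneg)
    then show ?thesis
      using \<open>a \<ge> 0\<close> by (simp add: a_def b_def)
  next
    case False
    have "c * b ^ 2 \<le> a * (c * V)"
      using chi2_swap_sq_le False by (simp add: a_def b_def V_def mult_left_mono)
    also have "\<dots> \<le> a * (b - c * b ^ 2)"
      using mult_weighted_var_inv_ratio_le[OF assms] \<open>a \<ge> 0\<close>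
      by (intro mult_left_mono) (simp_all add: a_def b_def V_def algebra_simps)
    finally have "b * (c * b * (1 + a)) \<le> b * a"
      by (simp add: algebra_simps power2_eq_square)
    then show ?thesis
      using \<open>a \<ge> 0\<close> \<open>b \<ge> 0\<close> False
      by (cases "b = 0") (simp_all add: mult_le_cancel_left a_def b_def)
  qed
qed

end

theorem corollary2:
  fixes A :: "'a set" and P Q :: "'a \<Rightarrow> real"
  assumes "finite A" and "A \<noteq> {}"
    and "\<And>x. x \<in> A \<Longrightarrow> P x > 0" and "\<And>x. x \<in> A \<Longrightarrow> Q x > 0"
    and "(\<Sum>x\<in>A. P x) = 1" and "(\<Sum>x\<in>A. Q x) = 1"
  shows "(MIN x\<in>A. P x / Q x) * chi2 A Q P \<le> chi2 A P Q / (1 + chi2 A P Q)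
       \<and> chi2 A P Q / (1 + chi2 A P Q) \<le> (MAX x\<in>A. P x / Q x) * chi2 A Q P"
proof
  interpret positive_distributions A P Q
    using assms(3-6) by unfold_locales
  have "chi2 A P Q \<ge> 0"
    using chi2_nonneg assms(4) .
  then have "0 < 1 + chi2 A P Q"
    by linarith
  then show "(MIN x\<in>A. P x / Q x) * chi2 A Q P \<le> chi2 A P Q / (1 + chi2 A P Q)"
    using chi2_swap_mult_one_plus_chi2_le[of "MIN x\<in>A. P x / Q x"] assms(1)
    by (simp add: pos_le_divide_eq)
  have "chi2 A P Q / (1 + chi2 A P Q) \<le> chi2 A P Q"
    using \<open>chi2 A P Q \<ge> 0\<close> by (simp add: divide_le_eq algebra_simps)
  also have "\<dots> \<le> (MAX x\<in>A. P x / Q x) * chi2 A Q P"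
    using assms(1,3,4) by (intro chi2_le_mult_chi2_swap) auto
  finally show "chi2 A P Q / (1 + chi2 A P Q) \<le> (MAX x\<in>A. P x / Q x) * chi2 A Q P" .
qed

end
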